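(* Let $\alpha>0$, $t_0>0$, $x_0\in\mathcal H$, and let $x:[t_0,+\infty)\to\mathcal H$ be a solution of the Cauchy problem $$\tfrac{\alpha}{t}\dot x(t)+\operatorname{proj}_{C(x(t))+\ddot x(t)}(0)=0\ (t>t_0),\qquad x(t_0)=x_0,\ \dot x(t_0)=0 .$$ Assume that every $f_i$ is bounded from below and that the Assumption on the weak Pareto set in the context holds. Then for every $i=1,\dots,m$ the limit $f_i^\infty=\lim_{t\to\infty}f_i(x(t))$ exists in $\mathbb R$, and $f_i^\infty=\mathcal W_i^\infty$, where $\mathcal W_i^\infty=\lim_{t\to+\infty}\big(f_i(x(t))+\frac12\|\dot x(t)\|^2\big)$.
   Context: $\mathcal H$ is a real Hilbert space. $f_1,\dots,f_m:\mathcal H\to\mathbb R$ are convex and continuously differentiable, and $F=(f_1,\dots,f_m)$. $C(x)=\operatorname{co}\{\nabla f_i(x):i=1,\dots,m\}$. For a closed convex $K$, $\operatorname{proj}_K(y)=\arg\min_{w\in K}\|w-y\|^2$. A solution of the Cauchy problem is a function $x:[t_0,+\infty)\to\mathcal H$ such that: $x\in C^1([t_0,+\infty))$; $\dot x$ is absolutely continuous on $[t_0,T]$ for every $T\ge t_0$; there is a Bochner measurable $\ddot x$ with $\dot x(t)=\dot x(t_0)+\int_{t_0}^t\ddot x(s)\,ds$ for all $t$, and $\frac{d}{dt}\dot x=\ddot x$ a.e.; the equation holds for almost all $t\ge t_0$; and the initial conditions hold. A point $x^*$ is weakly Pareto optimal if there is no $x$ with $f_i(x)<f_i(x^* )$ for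 all $i$; $P_w$ denotes the set of such points. For $\hat F\in\mathbb R^m$, $\mathcal L(\hat F)=\{x:F(x)\le\hat F\}$ and $P_w(\hat F)=P_w\cap\mathcal L(\hat F)$. Assumption: for all $x_0\in\mathcal H$ and all $x\in\mathcal L(F(x_0))$ there exists $x^*\in P_w(F(x))$, and $$R:=\sup_{F^*\in F(P_w(F(x_0)))}\ \inf_{x\in F^{-1}(F^* )}\tfrac12\|x-x_0\|^2<+\infty .$$ *)

theory Defs
  imports "HOL-Analysis.Analysis"
begin

definition proj :: "'a::real_inner set \<Rightarrow> 'a \<Rightarrow> 'a" where
  "proj K y = (SOME w. w \<in> K \<and> (\<forall>v\<in>K. norm (w - y) ^ 2 \<le> norm (v - y) ^ 2))"

definition abs_continuous_on :: "real \<Rightarrow> real \<Rightarrow> (real \<Rightarrow> 'a::real_normed_vector) \<Rightarrow> bool" where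
  "abs_continuous_on a b g \<longleftrightarrow>
     (\<forall>\<epsilon>>0. \<exists>\<delta>>0. \<forall>(n::nat) (u::nat \<Rightarrow> real) v.
        (\<forall>k<n. a \<le> u k \<and> u k \<le> v k \<and> v k \<le> b) \<and>
        (\<forall>k<n. \<forall>j<n. j \<noteq> k \<longrightarrow> v k \<le> u j \<or> v j \<le> u k) \<and>
        (\<Sum>k<n. v k - u k) < \<delta>
        \<longrightarrow> (\<Sum>k<n. norm (g (v k) - g (u k))) < \<epsilon>)"

text \<open>Bochner (strong) measurability on a set S of reals, in the Pettis form:
  Borel measurable and almost everywhere separably valued.\<close>
definition strongly_measurable_on :: "real set \<Rightarrow> (real \<Rightarrow> 'a::real_normed_vector) \<Rightarrow> bool" where
  "strongly_measurable_on S g \<longleftrightarrow>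
     g \<in> borel_measurable (restrict_space lebesgue S) \<and>
     (\<exists>D. countable D \<and> (AE t in lebesgue. t \<in> S \<longrightarrow> g t \<in> closure D))"

definition Cset :: "nat \<Rightarrow> (nat \<Rightarrow> 'a \<Rightarrow> 'a::real_inner) \<Rightarrow> 'a \<Rightarrow> 'a set" where
  "Cset m g z = convex hull {g i z | i. i \<in> {1..m}}"

definition weakly_pareto :: "nat \<Rightarrow> (nat \<Rightarrow> 'a \<Rightarrow> real) \<Rightarrow> 'a \<Rightarrow> bool" where
  "weakly_pareto m f xs \<longleftrightarrow> \<not> (\<exists>y. \<forall>i\<in>{1..m}. f i y < f i xs)"

definition level_set :: "nat \<Rightarrow> (nat \<Rightarrow> 'a \<Rightarrow> real) \<Rightarrow> (nat \<Rightarrow> real) \<Rightarrow> 'a set" where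
  "level_set m f Fh = {z. \<forall>i\<in>{1..m}. f i z \<le> Fh i}"

definition Pw_level :: "nat \<Rightarrow> (nat \<Rightarrow> 'a \<Rightarrow> real) \<Rightarrow> (nat \<Rightarrow> real) \<Rightarrow> 'a set" where
  "Pw_level m f Fh = {z. weakly_pareto m f z} \<inter> level_set m f Fh"

end

theory Submission
  imports Defs "HOL-Real_Asymp.Real_Asymp"
begin

text \<open>
  Along a solution the energies W_i = f_i(x) + \<parallel>x'\<parallel>^2/2 satisfy
  W_i(t) + \<alpha> \<integral>_s^t \<parallel>x'\<parallel>^2/r dr \<le> W_i(s): the projection in the equation equals
  -(\<alpha>/t) x', and its variational inequality tested with \<nabla>f_i(x) + x'' gives
  \<langle>\<nabla>f_i(x), x'\<rangle> + \<langle>x'', x'\<rangle> \<le> -(\<alpha>/t) \<parallel>x'\<parallel>^2. Hence every W_i converges, the damping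
  integral is finite, and it remains to show \<parallel>x'(t)\<parallel> \<rightarrow> 0. Otherwise, at some late time t1
  the kinetic energy exceeds 2d while every W_i is within d of its limit, so z = x(t1)
  satisfies f_i(z) + d \<le> lim W_i. By convexity every c \<in> C(x(r)) then satisfies
  \<langle>x(r) - z, c\<rangle> \<ge> d - \<parallel>x'(r)\<parallel>^2/2, and since x'' = -(\<alpha>/r) x' - c with c \<in> C(x), the
  quantity r^\<alpha> \<langle>x - z, x'\<rangle> decreases like -t^(\<alpha>+1) once the tail of the damping integral
  is small. So \<langle>x - z, x'\<rangle> \<le> -1 eventually, which the nonnegative \<parallel>x - z\<parallel>^2 cannot sustain.

  Since x'' is only known through x'(t) = x'(t0) + \<integral> x'', the derivatives of \<parallel>x'\<parallel>^2 and of
  r^\<alpha> \<langle>x - z, x'\<rangle> are replaced by a product rule for primitives in the integral sense.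
\<close>

section \<open>Primitives in the integral sense\<close>

lemma has_integral_le_except_negligible:
  fixes f g :: "real \<Rightarrow> real"
  assumes "(f has_integral i) S" "(g has_integral j) S" "negligible N"
    and "\<And>r. r \<in> S - N \<Longrightarrow> f r \<le> g r"
  shows "i \<le> j"
proof -
  have "((\<lambda>r. if r \<in> N then g r else f r) has_integral i) S"
    by (rule has_integral_spike[OF assms(3) _ assms(1)]) auto
  then show ?thesis
    by (rule has_integral_le[OF _ assms(2)]) (use assms(4) in auto)
qed

lemma le_by_short_steps:
  fixes G :: "real \<Rightarrow> real"
  assumes "s \<le> t" "\<delta> > 0"
    and step: "\<And>a b. s \<le> a \<Longrightarrow> a \<le> b \<Longrightarrow> b \<le> t \<Longrightarrow> b - a < \<delta> \<Longrightarrow> G b \<le> G a"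
  shows "G t \<le> G s"
proof -
  obtain n :: nat where n: "(t - s) / \<delta> < n"
    using reals_Archimedean2 by blast
  moreover have "0 \<le> (t - s) / \<delta>"
    using assms by (simp add: divide_nonneg_pos)
  ultimately have "n > 0"
    by simp
  define h where "h = (t - s) / n"
  have h: "0 \<le> h" "h < \<delta>" "n * h = t - s"
    using assms n \<open>n > 0\<close> by (auto simp: h_def divide_less_eq mult.commute)
  have "G (s + k * h) \<le> G s" if "k \<le> n" for k :: nat
    using that
  proof (induction k)
    case 0
    then show ?case by simp
  next
    case (Suc k)
    have "real (Suc k) * h \<le> n * h"
      using Suc.prems h(1) by (intro mult_right_mono) auto
    then have "G (s + Suc k * h) \<le> G (s + k * h)"
      using h by (intro step) (auto simp: algebra_simps)
    with Suc show ?case by simp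
  qed
  from this[of n] show ?thesis
    using h(3) by simp
qed

definition primitive_on :: "(real \<Rightarrow> 'a::real_normed_vector) \<Rightarrow> (real \<Rightarrow> 'a) \<Rightarrow> real \<Rightarrow> real \<Rightarrow> bool"
  where "primitive_on u U s t \<longleftrightarrow>
    (\<forall>a b. s \<le> a \<longrightarrow> a \<le> b \<longrightarrow> b \<le> t \<longrightarrow> (U has_integral (u b - u a)) {a..b})"

lemma primitive_onD:
  "primitive_on u U s t \<Longrightarrow> s \<le> a \<Longrightarrow> a \<le> b \<Longrightarrow> b \<le> t \<Longrightarrow> (U has_integral (u b - u a)) {a..b}"
  by (simp add: primitive_on_def)

lemma primitive_on_subinterval:
  "primitive_on u U s t \<Longrightarrow> s \<le> s' \<Longrightarrow> t' \<le> t \<Longrightarrow> primitive_on u U s' t'"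
  by (simp add: primitive_on_def)

lemma primitive_onI_base_point:
  fixes U :: "real \<Rightarrow> 'a::banach"
  assumes base: "\<And>\<tau>. s \<le> \<tau> \<Longrightarrow> \<tau> \<le> t \<Longrightarrow> (U has_integral (u \<tau> - u s)) {s..\<tau>}"
  shows "primitive_on u U s t"
  unfolding primitive_on_def
proof (intro allI impI)
  fix a b
  assume ab: "s \<le> a" "a \<le> b" "b \<le> t"
  have ib: "(U has_integral (u b - u s)) {s..b}" and ia: "(U has_integral (u a - u s)) {s..a}"
    using base ab by auto
  obtain y where y: "(U has_integral y) {a..b}"
    using integrable_subinterval_real[OF has_integral_integrable[OF ib], of a b] ab by auto
  have "(U has_integral (u a - u s) + y) {s..b}"
    using has_integral_combine[OF ab(1,2) ia y] .
  with ib have "y = u b - u a"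
    by (auto dest: has_integral_unique simp: algebra_simps)
  with y show "(U has_integral (u b - u a)) {a..b}"
    by simp
qed

lemma primitive_on_integral:
  fixes U :: "real \<Rightarrow> 'a::banach"
  assumes "U integrable_on {s..t}"
  shows "primitive_on (\<lambda>\<tau>. integral {s..\<tau>} U) U s t"
  by (rule primitive_onI_base_point)
    (use integrable_subinterval_real[OF assms] in \<open>auto intro: integrable_integral\<close>)

lemma primitive_on_derivative:
  fixes u :: "real \<Rightarrow> 'a::banach"
  assumes "\<And>r. s \<le> r \<Longrightarrow> r \<le> t \<Longrightarrow> (u has_vector_derivative U r) (at r within {s..t})"
  shows "primitive_on u U s t"
  unfolding primitive_on_def
proof (intro allI impI)
  fix a b
  assume ab: "s \<le> a" "a \<le> b" "b \<le> t"
  show "(U has_integral (u b - u a)) {a..b}"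
    by (rule fundamental_theorem_of_calculus[OF ab(2)])
      (use ab in \<open>auto intro: has_vector_derivative_within_subset[OF assms]\<close>)
qed

lemma primitive_on_inner_derivative:
  fixes u :: "real \<Rightarrow> 'a::real_inner"
  assumes "\<And>r. s \<le> r \<Longrightarrow> r \<le> t \<Longrightarrow> (u has_vector_derivative U r) (at r within {s..t})"
  shows "primitive_on (\<lambda>r. u r \<bullet> w) (\<lambda>r. U r \<bullet> w) s t"
  by (rule primitive_on_derivative)
    (use assms in \<open>auto intro: bounded_linear.has_vector_derivative[OF bounded_linear_inner_left]\<close>)

lemma inner_product_increment_le_oscillation:
  fixes u v U V :: "real \<Rightarrow> 'a::real_inner" and e E q :: "real \<Rightarrow> real"
  assumes "a \<le> b"
    and e: "primitive_on e E a b"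
    and u: "\<And>w. primitive_on (\<lambda>r. u r \<bullet> w) (\<lambda>r. U r \<bullet> w) a b"
    and v: "\<And>w. primitive_on (\<lambda>r. v r \<bullet> w) (\<lambda>r. V r \<bullet> w) a b"
    and q: "(q has_integral \<iota>) {a..b}"
    and UV: "((\<lambda>r. norm (U r) + norm (V r)) has_integral \<mu>) {a..b}"
    and "negligible N"
    and pointwise: "\<And>r. r \<in> {a..b} - N \<Longrightarrow> E r + U r \<bullet> v r + V r \<bullet> u r \<le> q r"
    and osc_u: "\<And>r. r \<in> {a..b} \<Longrightarrow> norm (u a - u r) \<le> \<epsilon>"
    and osc_v: "\<And>r. r \<in> {a..b} \<Longrightarrow> norm (v b - v r) \<le> \<epsilon>"
  shows "e b + u b \<bullet> v b - (e a + u a \<bullet> v a) - \<iota> \<le> \<epsilon> * \<mu>"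
proof -
  have "((\<lambda>r. E r + U r \<bullet> v b + V r \<bullet> u a - q r) has_integral
      e b - e a + (u b \<bullet> v b - u a \<bullet> v b) + (v b \<bullet> u a - v a \<bullet> u a) - \<iota>) {a..b}"
    using \<open>a \<le> b\<close>
    by (intro has_integral_diff has_integral_add q primitive_onD[OF e] primitive_onD[OF u]
        primitive_onD[OF v]) auto
  moreover have "((\<lambda>r. \<epsilon> * (norm (U r) + norm (V r))) has_integral \<epsilon> * \<mu>) {a..b}"
    using has_integral_mult_right[OF UV] .
  ultimately have "e b - e a + (u b \<bullet> v b - u a \<bullet> v b) + (v b \<bullet> u a - v a \<bullet> u a) - \<iota> \<le> \<epsilon> * \<mu>"
  proof (rule has_integral_le_except_negligible[OF _ _ \<open>negligible N\<close>])
    fix r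
    assume r: "r \<in> {a..b} - N"
    have "E r + U r \<bullet> v b + V r \<bullet> u a - q r \<le> U r \<bullet> (v b - v r) + V r \<bullet> (u a - u r)"
      using pointwise[OF r] by (simp add: inner_diff_right)
    also have "\<dots> \<le> norm (U r) * norm (v b - v r) + norm (V r) * norm (u a - u r)"
      by (intro add_mono norm_cauchy_schwarz)
    also have "\<dots> \<le> norm (U r) * \<epsilon> + norm (V r) * \<epsilon>"
      using r by (intro add_mono mult_left_mono osc_u osc_v) auto
    finally show "E r + U r \<bullet> v b + V r \<bullet> u a - q r \<le> \<epsilon> * (norm (U r) + norm (V r))"
      by (simp add: algebra_simps)
  qed
  then show ?thesis
    by (simp add: inner_commute algebra_simps)
qed

text \<open>
  No derivative of u \<bullet> v is available; its increment is estimated on short intervals, on which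
  u and v oscillate little.
\<close>

lemma inner_product_increment_le_epsilon:
  fixes u v U V :: "real \<Rightarrow> 'a::real_inner" and e E q :: "real \<Rightarrow> real"
  assumes "s \<le> t"
    and u_cont: "continuous_on {s..t} u" and v_cont: "continuous_on {s..t} v"
    and e: "primitive_on e E s t"
    and u: "\<And>w. primitive_on (\<lambda>r. u r \<bullet> w) (\<lambda>r. U r \<bullet> w) s t"
    and v: "\<And>w. primitive_on (\<lambda>r. v r \<bullet> w) (\<lambda>r. V r \<bullet> w) s t"
    and U_int: "(\<lambda>r. norm (U r)) integrable_on {s..t}"
    and V_int: "(\<lambda>r. norm (V r)) integrable_on {s..t}"
    and q_int: "q integrable_on {s..t}"
    and "negligible N"
    and pointwise: "\<And>r. r \<in> {s..t} - N \<Longrightarrow> E r + U r \<bullet> v r + V r \<bullet> u r \<le> q r"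
    and "\<epsilon> > 0"
  shows "e t + u t \<bullet> v t - (e s + u s \<bullet> v s) - integral {s..t} q
    \<le> \<epsilon> * integral {s..t} (\<lambda>r. norm (U r) + norm (V r))"
proof -
  define Q where "Q \<tau> = integral {s..\<tau>} q" for \<tau>
  define M where "M \<tau> = integral {s..\<tau>} (\<lambda>r. norm (U r) + norm (V r))" for \<tau>
  define D where "D \<tau> = e \<tau> + u \<tau> \<bullet> v \<tau> - Q \<tau>" for \<tau>
  have Q: "primitive_on Q q s t"
    unfolding Q_def using q_int by (rule primitive_on_integral)
  have M: "primitive_on M (\<lambda>r. norm (U r) + norm (V r)) s t"
    unfolding M_def using U_int V_int by (intro primitive_on_integral integrable_add)
  obtain \<delta>u where "\<delta>u > 0"
    and \<delta>u: "\<And>r r'. r \<in> {s..t} \<Longrightarrow> r' \<in> {s..t} \<Longrightarrow> dist r' r < \<delta>u \<Longrightarrow> dist (u r') (u r) < \<epsilon>"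
    using compact_uniformly_continuous[OF u_cont compact_Icc] \<open>\<epsilon> > 0\<close>
    unfolding uniformly_continuous_on_def by metis
  obtain \<delta>v where "\<delta>v > 0"
    and \<delta>v: "\<And>r r'. r \<in> {s..t} \<Longrightarrow> r' \<in> {s..t} \<Longrightarrow> dist r' r < \<delta>v \<Longrightarrow> dist (v r') (v r) < \<epsilon>"
    using compact_uniformly_continuous[OF v_cont compact_Icc] \<open>\<epsilon> > 0\<close>
    unfolding uniformly_continuous_on_def by metis
  have "D t - \<epsilon> * M t \<le> D s - \<epsilon> * M s"
  proof (rule le_by_short_steps[where G = "\<lambda>\<tau>. D \<tau> - \<epsilon> * M \<tau>", OF \<open>s \<le> t\<close>])
    show "min \<delta>u \<delta>v > 0"
      using \<open>\<delta>u > 0\<close> \<open>\<delta>v > 0\<close> by simp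
    fix a b
    assume ab: "s \<le> a" "a \<le> b" "b \<le> t" "b - a < min \<delta>u \<delta>v"
    have "primitive_on e E a b"
      "\<And>w. primitive_on (\<lambda>r. u r \<bullet> w) (\<lambda>r. U r \<bullet> w) a b"
      "\<And>w. primitive_on (\<lambda>r. v r \<bullet> w) (\<lambda>r. V r \<bullet> w) a b"
      using e u v ab by (blast intro: primitive_on_subinterval)+
    then have "e b + u b \<bullet> v b - (e a + u a \<bullet> v a) - (Q b - Q a) \<le> \<epsilon> * (M b - M a)"
    proof (rule inner_product_increment_le_oscillation[OF ab(2) _ _ _
          primitive_onD[OF Q] primitive_onD[OF M] \<open>negligible N\<close>])
      fix r
      assume r: "r \<in> {a..b}"
      then have "norm (u a - u r) < \<epsilon>" "norm (v b - v r) < \<epsilon>"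
        using ab \<delta>u[of r a] \<delta>v[of r b] by (auto simp: dist_norm dist_real_def)
      then show "norm (u a - u r) \<le> \<epsilon>" "norm (v b - v r) \<le> \<epsilon>"
        by simp_all
    qed (use ab pointwise in auto)
    then show "D b - \<epsilon> * M b \<le> D a - \<epsilon> * M a"
      by (simp add: D_def algebra_simps)
  qed
  then show ?thesis
    by (simp add: D_def Q_def M_def algebra_simps)
qed

lemma inner_product_increment_le:
  fixes u v U V :: "real \<Rightarrow> 'a::real_inner" and e E q :: "real \<Rightarrow> real"
  assumes "s \<le> t"
    and u_cont: "continuous_on {s..t} u" and v_cont: "continuous_on {s..t} v"
    and e: "primitive_on e E s t"
    and u: "\<And>w. primitive_on (\<lambda>r. u r \<bullet> w) (\<lambda>r. U r \<bullet> w) s t"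
    and v: "\<And>w. primitive_on (\<lambda>r. v r \<bullet> w) (\<lambda>r. V r \<bullet> w) s t"
    and U_int: "(\<lambda>r. norm (U r)) integrable_on {s..t}"
    and V_int: "(\<lambda>r. norm (V r)) integrable_on {s..t}"
    and q_int: "q integrable_on {s..t}"
    and "negligible N"
    and pointwise: "\<And>r. r \<in> {s..t} - N \<Longrightarrow> E r + U r \<bullet> v r + V r \<bullet> u r \<le> q r"
  shows "e t + u t \<bullet> v t - (e s + u s \<bullet> v s) \<le> integral {s..t} q"
proof -
  let ?\<mu> = "integral {s..t} (\<lambda>r. norm (U r) + norm (V r))"
  have "0 \<le> ?\<mu>"
    using U_int V_int by (intro integral_nonneg integrable_add) auto
  have "e t + u t \<bullet> v t - (e s + u s \<bullet> v s) - integral {s..t} q \<le> 0 + \<eta>" if "\<eta> > 0" for \<eta>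
  proof -
    have "\<eta> / (?\<mu> + 1) * ?\<mu> \<le> \<eta>"
      using \<open>0 \<le> ?\<mu>\<close> that by (simp add: field_simps)
    with inner_product_increment_le_epsilon[OF assms, of "\<eta> / (?\<mu> + 1)"] \<open>0 \<le> ?\<mu>\<close> that
    show ?thesis
      by simp
  qed
  then have "e t + u t \<bullet> v t - (e s + u s \<bullet> v s) - integral {s..t} q \<le> 0"
    by (rule field_le_epsilon)
  then show ?thesis
    by simp
qed

section \<open>Projections and convex gradients\<close>

lemma proj_nearest:
  fixes K :: "'a::real_inner set"
  assumes "compact K" "K \<noteq> {}"
  shows "proj K y \<in> K \<and> (\<forall>v\<in>K. norm (proj K y - y) ^ 2 \<le> norm (v - y) ^ 2)"
proof -
  have "continuous_on K (\<lambda>v. norm (v - y) ^ 2)"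
    by (intro continuous_intros)
  then obtain w where "w \<in> K" "\<forall>v\<in>K. norm (w - y) ^ 2 \<le> norm (v - y) ^ 2"
    using continuous_attains_inf[OF assms] by blast
  then show ?thesis
    unfolding proj_def by (rule someI[where x = w, OF conjI])
qed

lemma nearest_point_variational_ineq:
  fixes K :: "'a::real_inner set"
  assumes "convex K" "w \<in> K" "k \<in> K"
    and nearest: "\<And>v. v \<in> K \<Longrightarrow> norm (w - y) ^ 2 \<le> norm (v - y) ^ 2"
  shows "0 \<le> (w - y) \<bullet> (k - w)"
proof (rule ccontr)
  define A where "A = (w - y) \<bullet> (k - w)"
  define B where "B = norm (k - w) ^ 2"
  define \<theta> where "\<theta> = min 1 (- A / B)"
  assume "\<not> ?thesis"
  then have "A < 0"
    by (simp add: A_def)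
  then have "B > 0"
    by (auto simp: A_def B_def)
  then have \<theta>: "0 < \<theta>" "\<theta> \<le> 1" "\<theta> * B \<le> - A"
    using \<open>A < 0\<close> by (auto simp: \<theta>_def min_def field_simps)
  have "(1 - \<theta>) *\<^sub>R w + \<theta> *\<^sub>R k \<in> K"
    using \<theta> by (intro convexD[OF assms(1-3)]) auto
  then have "norm (w - y) ^ 2 \<le> norm (w - y + \<theta> *\<^sub>R (k - w)) ^ 2"
    using nearest by (force simp: algebra_simps)
  also have "\<dots> = norm (w - y) ^ 2 + \<theta> * (2 * A + \<theta> * B)"
    unfolding A_def B_def power2_norm_eq_inner
    by (simp add: inner_add_left inner_add_right inner_commute algebra_simps)
  finally have "0 \<le> \<theta> * (2 * A + \<theta> * B)"
    by simp
  moreover have "\<theta> * (2 * A + \<theta> * B) < 0"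
    using \<theta> \<open>A < 0\<close> by (intro mult_pos_neg) auto
  ultimately show False
    by simp
qed

lemma proj_variational_ineq:
  fixes K :: "'a::real_inner set"
  assumes "compact K" "convex K" "K \<noteq> {}" "k \<in> K"
  shows "0 \<le> (proj K y - y) \<bullet> (k - proj K y)"
  using proj_nearest[OF assms(1,3), of y]
  by (intro nearest_point_variational_ineq[OF assms(2) _ assms(4)]) auto

lemma gderiv_convex_above_tangent:
  fixes f :: "'a::real_inner \<Rightarrow> real"
  assumes "convex_on UNIV f" and "GDERIV f y :> G"
  shows "f y + G \<bullet> (z - y) \<le> f z"
proof -
  define \<gamma> where "\<gamma> \<theta> = y + \<theta> *\<^sub>R (z - y)" for \<theta> :: real
  have "convex_on UNIV (f \<circ> \<gamma>)"
  proof (rule convex_onI)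
    fix t a b :: real
    assume "0 < t" "t < 1"
    have "\<gamma> ((1 - t) * a + t * b) = (1 - t) *\<^sub>R \<gamma> a + t *\<^sub>R \<gamma> b"
      by (simp add: \<gamma>_def algebra_simps)
    with convex_onD[OF assms(1), of t "\<gamma> a" "\<gamma> b"] \<open>0 < t\<close> \<open>t < 1\<close>
    show "(f \<circ> \<gamma>) ((1 - t) *\<^sub>R a + t *\<^sub>R b) \<le> (1 - t) * (f \<circ> \<gamma>) a + t * (f \<circ> \<gamma>) b"
      by simp
  qed simp
  have "(\<gamma> has_vector_derivative (z - y)) (at 0)"
    unfolding \<gamma>_def by (auto intro!: derivative_eq_intros)
  moreover have "(f has_derivative (\<lambda>h. h \<bullet> G)) (at (\<gamma> 0) within range \<gamma>)"
    using assms(2) by (auto simp: gderiv_def \<gamma>_def intro: has_derivative_at_withinI)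
  ultimately have "((f \<circ> \<gamma>) has_real_derivative G \<bullet> (z - y)) (at 0)"
    using vector_derivative_diff_chain_within
    by (fastforce simp: has_real_derivative_iff_has_vector_derivative inner_commute)
  with \<open>convex_on UNIV (f \<circ> \<gamma>)\<close> have "G \<bullet> (z - y) * (1 - 0) \<le> (f \<circ> \<gamma>) 1 - (f \<circ> \<gamma>) 0"
    by (intro convex_on_imp_above_tangent[where A = UNIV]) (auto simp: o_def)
  then show ?thesis
    by (simp add: \<gamma>_def)
qed

lemma inner_convex_hull_gradients_ge:
  fixes f :: "'i \<Rightarrow> 'a::real_inner \<Rightarrow> real"
  assumes "\<And>i. i \<in> I \<Longrightarrow> convex_on UNIV (f i)" "\<And>i. i \<in> I \<Longrightarrow> GDERIV (f i) y :> G i"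
    and "\<And>i. i \<in> I \<Longrightarrow> f i z + e \<le> f i y"
    and "c \<in> convex hull {G i | i. i \<in> I}"
  shows "e \<le> (y - z) \<bullet> c"
proof -
  have "{G i | i. i \<in> I} \<subseteq> {c. e \<le> (y - z) \<bullet> c}"
  proof clarify
    fix i
    assume "i \<in> I"
    from gderiv_convex_above_tangent[OF assms(1,2)[OF this], of z] assms(3)[OF this]
    show "e \<le> (y - z) \<bullet> G i"
      by (simp add: inner_diff_left inner_diff_right inner_commute)
  qed
  then have "convex hull {G i | i. i \<in> I} \<subseteq> {c. e \<le> (y - z) \<bullet> c}"
    by (intro hull_minimal convex_halfspace_ge)
  with assms(4) show ?thesis
    by blast
qed

lemma gradient_in_Cset: "i \<in> {1..m} \<Longrightarrow> g i z \<in> Cset m g z"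
  unfolding Cset_def by (rule hull_inc) auto

lemma compact_Cset: "compact (Cset m g z)"
  unfolding Cset_def by (intro finite_imp_compact_convex_hull) auto

lemma Cset_nonempty: "m \<ge> 1 \<Longrightarrow> Cset m g z \<noteq> {}"
  using gradient_in_Cset[of 1 m g z] by auto

lemma convex_Cset: "convex (Cset m g z)"
  unfolding Cset_def by (rule convex_convex_hull)

section \<open>Limits at infinity\<close>

lemma antimono_bdd_below_tendsto_Inf:
  fixes F :: "real \<Rightarrow> real"
  assumes antimono: "\<And>s t. a \<le> s \<Longrightarrow> s \<le> t \<Longrightarrow> F t \<le> F s"
    and bounded: "\<And>t. a \<le> t \<Longrightarrow> b \<le> F t"
  shows "(F \<longlongrightarrow> Inf (F ` {a..})) at_top"
proof (rule decreasing_tendsto)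
  have bdd: "bdd_below (F ` {a..})"
    using bounded by (metis atLeast_iff bdd_belowI2)
  then show "\<forall>\<^sub>F t in at_top. Inf (F ` {a..}) \<le> F t"
    unfolding eventually_at_top_linorder by (auto intro: cInf_lower)
  fix c
  assume "Inf (F ` {a..}) < c"
  then obtain s where "a \<le> s" "F s < c"
    using cInf_less_iff[OF _ bdd] by auto
  then show "\<forall>\<^sub>F t in at_top. F t < c"
    unfolding eventually_at_top_linorder by (auto intro: le_less_trans[OF antimono])
qed

lemma eventually_powr_minus_linear_le:
  fixes a k C :: real
  assumes "0 < a" "0 < k"
  shows "eventually (\<lambda>t. C / t powr a - k * t \<le> -1) at_top"
  using assms by real_asymp

lemma not_eventually_approaching:
  fixes x x' :: "real \<Rightarrow> 'a::real_inner"
  assumes "\<And>t. T \<le> t \<Longrightarrow> (x has_vector_derivative x' t) (at t within {T..})"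
  shows "\<not> (\<forall>t\<ge>T. (x t - z) \<bullet> x' t \<le> -1)"
proof
  assume approaching: "\<forall>t\<ge>T. (x t - z) \<bullet> x' t \<le> -1"
  define \<phi> where "\<phi> t = (x t - z) \<bullet> (x t - z)" for t
  define T' where "T' = T + \<phi> T + 1"
  have "T \<le> T'"
    by (simp add: T'_def \<phi>_def)
  have \<phi>_deriv: "(\<phi> has_derivative (\<lambda>h. h * (2 * ((x t - z) \<bullet> x' t)))) (at t within {T..T'})"
    if "T \<le> t" "t \<le> T'" for t
    using has_vector_derivative_within_subset[OF assms[OF that(1)], of "{T..T'}"] unfolding \<phi>_def
    by (auto intro!: derivative_eq_intros simp: has_vector_derivative_def inner_commute algebra_simps)
  then obtain \<xi> where "\<xi> \<in> {T..T'}" "\<phi> T' - \<phi> T = (T' - T) * (2 * ((x \<xi> - z) \<bullet> x' \<xi>))"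
    using mvt_very_simple[OF \<open>T \<le> T'\<close> \<phi>_deriv] by blast
  moreover have "(T' - T) * (2 * ((x \<xi> - z) \<bullet> x' \<xi>)) \<le> (T' - T) * (-2)"
    using approaching \<open>\<xi> \<in> {T..T'}\<close> \<open>T \<le> T'\<close> by (intro mult_left_mono) auto
  moreover have "0 \<le> \<phi> T'"
    by (simp add: \<phi>_def)
  ultimately show False
    by (simp add: T'_def)
qed

section \<open>Energy estimates along the inertial dynamics\<close>

locale inertial_multiobjective_flow =
  fixes m :: nat
    and f :: "nat \<Rightarrow> 'a::{real_inner, complete_space} \<Rightarrow> real"
    and g :: "nat \<Rightarrow> 'a \<Rightarrow> 'a"
    and \<alpha> t0 :: real
    and x x' x'' :: "real \<Rightarrow> 'a"
  assumes m: "m \<ge> 1"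
    and convex: "\<And>i. i \<in> {1..m} \<Longrightarrow> convex_on UNIV (f i)"
    and grad: "\<And>i z. i \<in> {1..m} \<Longrightarrow> GDERIV (f i) z :> g i z"
    and alpha: "\<alpha> > 0" and t0: "t0 > 0"
    and x_deriv: "\<And>t. t \<ge> t0 \<Longrightarrow> (x has_vector_derivative x' t) (at t within {t0..})"
    and x'_cont: "continuous_on {t0..} x'"
    and x''_norm_int: "\<And>T. T \<ge> t0 \<Longrightarrow> (\<lambda>s. norm (x'' s)) integrable_on {t0..T}"
    and x''_int: "\<And>t. t \<ge> t0 \<Longrightarrow> (x'' has_integral (x' t - x' t0)) {t0..t}"
    and eq: "AE t in lebesgue. t > t0 \<longrightarrow>
               (\<alpha> / t) *\<^sub>R x' t + proj ((\<lambda>c. c + x'' t) ` Cset m g (x t)) 0 = 0"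
    and bdd_below: "\<And>i. i \<in> {1..m} \<Longrightarrow> \<exists>b. \<forall>z. b \<le> f i z"
begin

lemma x_continuous: "continuous_on {t0..} x"
  unfolding continuous_on_eq_continuous_within
  using x_deriv has_vector_derivative_continuous by (metis atLeast_iff)

lemma primitive_x':
  assumes "t0 \<le> s"
  shows "primitive_on (\<lambda>r. x' r \<bullet> w) (\<lambda>r. x'' r \<bullet> w) s t"
proof -
  have "((\<lambda>r. x'' r \<bullet> w) has_integral (x' \<tau> \<bullet> w - x' t0 \<bullet> w)) {t0..\<tau>}" if "t0 \<le> \<tau>" for \<tau>
    using has_integral_linear[OF x''_int[OF that] bounded_linear_inner_left, of w]
    by (simp add: o_def inner_diff_left)
  then have "primitive_on (\<lambda>r. x' r \<bullet> w) (\<lambda>r. x'' r \<bullet> w) t0 t"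
    by (intro primitive_onI_base_point) auto
  then show ?thesis
    using assms by (rule primitive_on_subinterval) simp
qed

lemma x''_norm_integrable: "t0 \<le> s \<Longrightarrow> (\<lambda>r. norm (x'' r)) integrable_on {s..t}"
  by (cases "s \<le> t") (auto intro: integrable_subinterval_real[OF x''_norm_int[of t]])

lemma primitive_f_x:
  assumes "i \<in> {1..m}" "t0 \<le> s"
  shows "primitive_on (\<lambda>r. f i (x r)) (\<lambda>r. g i (x r) \<bullet> x' r) s t"
proof (rule primitive_on_derivative)
  fix r
  assume r: "s \<le> r" "r \<le> t"
  have "(f i has_derivative (\<lambda>h. h \<bullet> g i (x r))) (at (x r) within x ` {s..t})"
    using grad[OF assms(1)] unfolding gderiv_def by (auto intro: has_derivative_at_withinI)
  moreover have "(x has_vector_derivative x' r) (at r within {s..t})"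
    using r assms(2) by (auto intro: has_vector_derivative_within_subset[OF x_deriv])
  ultimately show "((\<lambda>r. f i (x r)) has_vector_derivative g i (x r) \<bullet> x' r) (at r within {s..t})"
    using vector_derivative_diff_chain_within by (fastforce simp: o_def inner_commute)
qed

lemma acceleration_from_projection:
  assumes "t0 < r"
    and eq_r: "(\<alpha> / r) *\<^sub>R x' r + proj ((\<lambda>c. c + x'' r) ` Cset m g (x r)) 0 = 0"
  shows "\<exists>c\<in>Cset m g (x r). x'' r = - (\<alpha> / r) *\<^sub>R x' r - c"
    and "\<And>i. i \<in> {1..m} \<Longrightarrow> g i (x r) \<bullet> x' r + x'' r \<bullet> x' r \<le> - (\<alpha> / r) * norm (x' r) ^ 2"
proof -
  let ?K = "(\<lambda>c. c + x'' r) ` Cset m g (x r)"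
  have K: "?K = (+) (x'' r) ` Cset m g (x r)"
    by (auto simp: add.commute)
  have "compact ?K"
    unfolding K by (intro compact_translation compact_Cset)
  moreover have "convex ?K"
    unfolding K by (intro convex_translation convex_Cset)
  moreover have "?K \<noteq> {}"
    using Cset_nonempty[OF m, of g "x r"] by simp
  moreover have proj_eq: "proj ?K 0 = - (\<alpha> / r) *\<^sub>R x' r"
    using eq_r by (simp add: add_eq_0_iff)
  ultimately have "- (\<alpha> / r) *\<^sub>R x' r \<in> ?K"
    using proj_nearest by metis
  then show "\<exists>c\<in>Cset m g (x r). x'' r = - (\<alpha> / r) *\<^sub>R x' r - c"
    by (force simp: algebra_simps)
  fix i
  assume "i \<in> {1..m}"
  then have "g i (x r) + x'' r \<in> ?K"
    using gradient_in_Cset[of i m g "x r"] by blast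
  then have "0 \<le> (- (\<alpha> / r) *\<^sub>R x' r) \<bullet> (g i (x r) + x'' r + (\<alpha> / r) *\<^sub>R x' r)"
    using proj_variational_ineq[OF \<open>compact ?K\<close> \<open>convex ?K\<close> \<open>?K \<noteq> {}\<close>, of _ 0]
    by (simp add: proj_eq)
  also have "\<dots> = - (\<alpha> / r) * (g i (x r) \<bullet> x' r + x'' r \<bullet> x' r + (\<alpha> / r) * norm (x' r) ^ 2)"
    by (simp add: inner_add_right inner_commute power2_norm_eq_inner algebra_simps)
  finally have "(\<alpha> / r) * (g i (x r) \<bullet> x' r + x'' r \<bullet> x' r + (\<alpha> / r) * norm (x' r) ^ 2) \<le> 0"
    by linarith
  moreover have "\<alpha> / r > 0"
    using alpha t0 \<open>t0 < r\<close> by simp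
  ultimately have "g i (x r) \<bullet> x' r + x'' r \<bullet> x' r + (\<alpha> / r) * norm (x' r) ^ 2 \<le> 0"
    by (meson mult_le_0_iff not_le)
  then show "g i (x r) \<bullet> x' r + x'' r \<bullet> x' r \<le> - (\<alpha> / r) * norm (x' r) ^ 2"
    by linarith
qed

lemma ae_acceleration:
  obtains N where "negligible N"
    and "\<And>r. r \<in> {t0..} - N \<Longrightarrow> \<exists>c\<in>Cset m g (x r). x'' r = - (\<alpha> / r) *\<^sub>R x' r - c"
    and "\<And>r i. r \<in> {t0..} - N \<Longrightarrow> i \<in> {1..m} \<Longrightarrow>
           g i (x r) \<bullet> x' r + x'' r \<bullet> x' r \<le> - (\<alpha> / r) * norm (x' r) ^ 2"
proof -
  obtain N where "negligible N" and N: "\<And>r. r \<notin> N \<Longrightarrow> t0 < r \<Longrightarrow>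
      (\<alpha> / r) *\<^sub>R x' r + proj ((\<lambda>c. c + x'' r) ` Cset m g (x r)) 0 = 0"
    using eq unfolding eventually_ae_filter_negligible by blast
  show thesis
  proof (rule that[of "insert t0 N"])
    show "negligible (insert t0 N)"
      using \<open>negligible N\<close> by simp
  qed (use acceleration_from_projection N in auto)
qed

definition kinetic :: "real \<Rightarrow> real"
  where "kinetic t = norm (x' t) ^ 2 / 2"

definition energy :: "nat \<Rightarrow> real \<Rightarrow> real"
  where "energy i t = f i (x t) + kinetic t"

definition energy_limit :: "nat \<Rightarrow> real"
  where "energy_limit i = Inf (energy i ` {t0..})"

definition dissipation :: "real \<Rightarrow> real"
  where "dissipation t = integral {t0..t} (\<lambda>r. norm (x' r) ^ 2 / r)"

lemma continuous_on_damping: "t0 \<le> s \<Longrightarrow> continuous_on {s..t} (\<lambda>r. norm (x' r) ^ 2 / r)"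
  using t0 by (intro continuous_intros continuous_on_subset[OF x'_cont]) auto

lemma primitive_dissipation:
  assumes "t0 \<le> s"
  shows "primitive_on dissipation (\<lambda>r. norm (x' r) ^ 2 / r) s t"
proof -
  have "primitive_on dissipation (\<lambda>r. norm (x' r) ^ 2 / r) t0 t"
    unfolding dissipation_def
    by (intro primitive_on_integral integrable_continuous_interval continuous_on_damping) simp
  then show ?thesis
    using assms by (rule primitive_on_subinterval) simp
qed

lemma dissipation_mono:
  assumes "t0 \<le> s" "s \<le> t"
  shows "dissipation s \<le> dissipation t"
  using has_integral_nonneg[OF primitive_onD[OF primitive_dissipation[OF assms(1)]
      order_refl assms(2) order_refl]] assms t0
  by simp

lemma energy_dissipation:
  assumes "i \<in> {1..m}" "t0 \<le> s" "s \<le> t"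
  shows "energy i t + \<alpha> * (dissipation t - dissipation s) \<le> energy i s"
proof -
  obtain N where "negligible N"
    and descent: "\<And>r. r \<in> {t0..} - N \<Longrightarrow>
      g i (x r) \<bullet> x' r + x'' r \<bullet> x' r \<le> - (\<alpha> / r) * norm (x' r) ^ 2"
    using ae_acceleration assms(1) by metis
  have half_x': "primitive_on (\<lambda>r. ((1/2) *\<^sub>R x' r) \<bullet> w) (\<lambda>r. ((1/2) *\<^sub>R x'' r) \<bullet> w) s t" for w
    using primitive_x'[OF assms(2), of "(1/2) *\<^sub>R w"] by simp
  have "f i (x t) + x' t \<bullet> ((1/2) *\<^sub>R x' t) - (f i (x s) + x' s \<bullet> ((1/2) *\<^sub>R x' s))
      \<le> integral {s..t} (\<lambda>r. - \<alpha> * (norm (x' r) ^ 2 / r))"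
  proof (rule inner_product_increment_le[OF assms(3) _ _ primitive_f_x[OF assms(1,2)]
        primitive_x'[OF assms(2)] half_x' _ _ _ \<open>negligible N\<close>])
    have "continuous_on {s..t} x'"
      using assms(2) by (intro continuous_on_subset[OF x'_cont]) auto
    then show "continuous_on {s..t} x'" "continuous_on {s..t} (\<lambda>r. (1/2) *\<^sub>R x' r)"
      by (auto intro: continuous_intros)
    show "(\<lambda>r. norm (x'' r)) integrable_on {s..t}" "(\<lambda>r. norm ((1/2) *\<^sub>R x'' r)) integrable_on {s..t}"
      using x''_norm_integrable[OF assms(2)] integrable_cmul[of _ "{s..t}" "1/2"] by auto
    show "(\<lambda>r. - \<alpha> * (norm (x' r) ^ 2 / r)) integrable_on {s..t}"
      by (intro integrable_continuous_interval continuous_intros continuous_on_damping assms(2))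
    fix r
    assume "r \<in> {s..t} - N"
    with assms(2) show "g i (x r) \<bullet> x' r + x'' r \<bullet> (1/2) *\<^sub>R x' r + (1/2) *\<^sub>R x'' r \<bullet> x' r
        \<le> - \<alpha> * (norm (x' r) ^ 2 / r)"
      using descent[of r] by (simp add: inner_commute)
  qed
  moreover have "integral {s..t} (\<lambda>r. - \<alpha> * (norm (x' r) ^ 2 / r))
      = - \<alpha> * (dissipation t - dissipation s)"
    by (intro integral_unique has_integral_mult_right
        primitive_onD[OF primitive_dissipation[OF assms(2)]])
      (use assms(3) in auto)
  ultimately show ?thesis
    by (simp add: energy_def kinetic_def power2_norm_eq_inner)
qed

lemma energy_antimono:
  assumes "i \<in> {1..m}" "t0 \<le> s" "s \<le> t"
  shows "energy i t \<le> energy i s"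
proof -
  have "0 \<le> \<alpha> * (dissipation t - dissipation s)"
    using dissipation_mono[OF assms(2,3)] alpha by simp
  with energy_dissipation[OF assms] show ?thesis
    by linarith
qed

lemma energy_lower_bound:
  obtains b where "\<And>i t. i \<in> {1..m} \<Longrightarrow> b i \<le> energy i t"
proof -
  obtain b where "\<And>i z. i \<in> {1..m} \<Longrightarrow> b i \<le> f i z"
    using bdd_below by metis
  moreover have "0 \<le> kinetic t" for t
    by (simp add: kinetic_def)
  ultimately show thesis
    by (intro that[of b]) (smt (verit) energy_def)
qed

lemma energy_tendsto: "i \<in> {1..m} \<Longrightarrow> (energy i \<longlongrightarrow> energy_limit i) at_top"
proof -
  assume "i \<in> {1..m}"
  obtain b where "\<And>t. b \<le> energy i t"
    using energy_lower_bound \<open>i \<in> {1..m}\<close> by metis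
  then show ?thesis
    unfolding energy_limit_def using energy_antimono[OF \<open>i \<in> {1..m}\<close>]
    by (intro antimono_bdd_below_tendsto_Inf)
qed

lemma energy_limit_le:
  assumes "i \<in> {1..m}" "t0 \<le> t"
  shows "energy_limit i \<le> energy i t"
proof -
  obtain b where "\<And>t. b \<le> energy i t"
    using energy_lower_bound assms(1) by metis
  then show ?thesis
    unfolding energy_limit_def using assms(2) by (intro cInf_lower bdd_belowI2) auto
qed

lemma dissipation_bounded: "bdd_above (dissipation ` {t0..})"
proof -
  have one: "1 \<in> {1..m}"
    using m by simp
  obtain b where b: "b \<le> energy 1 t"  for t
    using energy_lower_bound one by metis
  have "dissipation t \<le> (energy 1 t0 - b) / \<alpha>" if "t0 \<le> t" for t
    using energy_dissipation[OF one order_refl that] b[of t] alpha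
    by (simp add: dissipation_def pos_le_divide_eq mult.commute)
  then show ?thesis
    by (intro bdd_aboveI2) auto
qed

lemma dissipation_tail:
  assumes "\<eta> > 0"
  obtains T where "t0 \<le> T" "\<And>t. T \<le> t \<Longrightarrow> dissipation t - dissipation T \<le> \<eta>"
proof -
  obtain T where T: "t0 \<le> T" "Sup (dissipation ` {t0..}) - \<eta> < dissipation T"
    using less_cSup_iff[OF _ dissipation_bounded, of "Sup (dissipation ` {t0..}) - \<eta>"] assms by auto
  show thesis
  proof (rule that[OF T(1)])
    fix t
    assume "T \<le> t"
    then have "dissipation t \<le> Sup (dissipation ` {t0..})"
      using T(1) by (intro cSup_upper[OF _ dissipation_bounded]) auto
    with T(2) show "dissipation t - dissipation T \<le> \<eta>"
      by linarith
  qed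
qed

lemma weighted_kinetic_integral_le:
  assumes "t0 \<le> T" "T \<le> t"
  shows "integral {T..t} (\<lambda>r. r powr \<alpha> * (3 * kinetic r - d))
    \<le> 3/2 * t powr (\<alpha> + 1) * (dissipation t - dissipation T)
      - d * (t powr (\<alpha> + 1) - T powr (\<alpha> + 1)) / (\<alpha> + 1)"
proof (rule has_integral_le)
  have "continuous_on {T..t} (\<lambda>r. r powr \<alpha> * (3 * kinetic r - d))"
    unfolding kinetic_def using assms(1) t0
    by (intro continuous_intros continuous_on_subset[OF x'_cont]) auto
  then show "((\<lambda>r. r powr \<alpha> * (3 * kinetic r - d)) has_integral
      integral {T..t} (\<lambda>r. r powr \<alpha> * (3 * kinetic r - d))) {T..t}"
    by (intro integrable_integral integrable_continuous_interval)
  have powr_primitive: "primitive_on (\<lambda>r. r powr (\<alpha> + 1) / (\<alpha> + 1)) (\<lambda>r. r powr \<alpha>) T t"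
  proof (rule primitive_on_derivative)
    fix r
    assume "T \<le> r"
    then have "r > 0"
      using assms(1) t0 by simp
    then show "((\<lambda>r. r powr (\<alpha> + 1) / (\<alpha> + 1)) has_vector_derivative r powr \<alpha>) (at r within {T..t})"
      using alpha unfolding has_real_derivative_iff_has_vector_derivative[symmetric]
      by (auto intro!: derivative_eq_intros)
  qed
  have "((\<lambda>r. norm (x' r) ^ 2 / r) has_integral dissipation t - dissipation T) {T..t}"
    using primitive_onD[OF primitive_dissipation[OF assms(1)] order_refl assms(2) order_refl] .
  moreover have "((\<lambda>r. r powr \<alpha>) has_integral t powr (\<alpha> + 1) / (\<alpha> + 1) - T powr (\<alpha> + 1) / (\<alpha> + 1)) {T..t}"
    using primitive_onD[OF powr_primitive order_refl assms(2) order_refl] .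
  ultimately show "((\<lambda>r. 3/2 * t powr (\<alpha> + 1) * (norm (x' r) ^ 2 / r) - d * r powr \<alpha>) has_integral
      3/2 * t powr (\<alpha> + 1) * (dissipation t - dissipation T)
        - d * (t powr (\<alpha> + 1) - T powr (\<alpha> + 1)) / (\<alpha> + 1)) {T..t}"
    by (rule has_integral_eq_rhs[OF
          has_integral_diff[OF has_integral_mult_right has_integral_mult_right]])
      (simp add: diff_divide_distrib right_diff_distrib)
  fix r
  assume r: "r \<in> {T..t}"
  then have "r > 0"
    using assms(1) t0 by simp
  then have "r powr \<alpha> * r \<le> t powr \<alpha> * t"
    using r alpha by (intro mult_mono powr_mono2) auto
  then have "r powr \<alpha> * r \<le> t powr (\<alpha> + 1)"
    using r \<open>r > 0\<close> by (simp add: powr_add)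
  then have "r powr \<alpha> \<le> t powr (\<alpha> + 1) / r"
    using \<open>r > 0\<close> by (simp add: pos_le_divide_eq)
  then have "r powr \<alpha> * (3/2 * norm (x' r) ^ 2) \<le> t powr (\<alpha> + 1) / r * (3/2 * norm (x' r) ^ 2)"
    by (intro mult_right_mono) auto
  then show "r powr \<alpha> * (3 * kinetic r - d) \<le> 3/2 * t powr (\<alpha> + 1) * (norm (x' r) ^ 2 / r) - d * r powr \<alpha>"
    by (simp add: kinetic_def algebra_simps)
qed

text \<open>
  The weight r^\<alpha> cancels the damping: with x'' = -(\<alpha>/r) x' - c one gets
  (r^\<alpha> \<langle>x - z, x'\<rangle>)' = r^\<alpha> (\<parallel>x'\<parallel>^2 - \<langle>x - z, c\<rangle>).
\<close>

lemma weighted_radial_derivative_eq: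
  assumes "r > 0" and x'': "x'' r = - (\<alpha> / r) *\<^sub>R x' r - c"
  shows "((\<alpha> * r powr (\<alpha> - 1)) *\<^sub>R (x r - z) + r powr \<alpha> *\<^sub>R x' r) \<bullet> x' r
      + x'' r \<bullet> (r powr \<alpha> *\<^sub>R (x r - z))
    = r powr \<alpha> * (2 * kinetic r - (x r - z) \<bullet> c)"
proof -
  have "r powr (\<alpha> - 1) = r powr \<alpha> / r"
    using assms(1) by (simp add: powr_diff)
  then show ?thesis
    by (simp add: x'' kinetic_def inner_add_left inner_diff_left power2_norm_eq_inner
        inner_commute algebra_simps)
qed

context
  fixes z :: 'a and d :: real
  assumes d_pos: "0 < d"
    and separated: "\<And>r c. t0 \<le> r \<Longrightarrow> c \<in> Cset m g (x r) \<Longrightarrow> d - kinetic r \<le> (x r - z) \<bullet> c"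
begin

lemma weighted_radial_velocity_increment:
  assumes "t0 \<le> T" "T \<le> t"
  shows "t powr \<alpha> * ((x t - z) \<bullet> x' t) - T powr \<alpha> * ((x T - z) \<bullet> x' T)
    \<le> integral {T..t} (\<lambda>r. r powr \<alpha> * (3 * kinetic r - d))"
proof -
  define \<psi> where "\<psi> r = r powr \<alpha> *\<^sub>R (x r - z)" for r
  define \<psi>' where "\<psi>' r = (\<alpha> * r powr (\<alpha> - 1)) *\<^sub>R (x r - z) + r powr \<alpha> *\<^sub>R x' r" for r
  have "T > 0"
    using assms(1) t0 by simp
  then have pos: "r > 0" if "T \<le> r" for r
    using that by simp
  have \<psi>_deriv: "(\<psi> has_vector_derivative \<psi>' r) (at r within {T..t})" if "T \<le> r" "r \<le> t" for r
  proof -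
    have "(x has_vector_derivative x' r) (at r within {T..t})"
      using that assms(1) by (auto intro: has_vector_derivative_within_subset[OF x_deriv])
    then show ?thesis
      unfolding \<psi>_def[abs_def] \<psi>'_def using pos[OF that(1)]
      by (auto intro!: derivative_eq_intros
          simp: has_real_derivative_iff_has_vector_derivative[symmetric])
  qed
  have cont: "continuous_on {T..t} x" "continuous_on {T..t} x'"
    using assms(1) by (auto intro: continuous_on_subset[OF x_continuous] continuous_on_subset[OF x'_cont])
  obtain N where "negligible N"
    and acceleration: "\<And>r. r \<in> {t0..} - N \<Longrightarrow> \<exists>c\<in>Cset m g (x r). x'' r = - (\<alpha> / r) *\<^sub>R x' r - c"
    using ae_acceleration by metis
  have "0 + \<psi> t \<bullet> x' t - (0 + \<psi> T \<bullet> x' T) \<le> integral {T..t} (\<lambda>r. r powr \<alpha> * (3 * kinetic r - d))"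
  proof (rule inner_product_increment_le[OF assms(2) _ cont(2) _
        primitive_on_inner_derivative[OF \<psi>_deriv] primitive_x'[OF assms(1)] _ _ _ \<open>negligible N\<close>])
    show "continuous_on {T..t} \<psi>"
      unfolding \<psi>_def using cont(1) \<open>T > 0\<close> by (auto intro!: continuous_intros)
    show "primitive_on (\<lambda>r. 0) (\<lambda>r. 0) T t"
      by (simp add: primitive_on_def)
    show "(\<lambda>r. norm (\<psi>' r)) integrable_on {T..t}"
      unfolding \<psi>'_def using cont \<open>T > 0\<close>
      by (auto intro!: integrable_continuous_interval continuous_intros)
    show "(\<lambda>r. norm (x'' r)) integrable_on {T..t}"
      using assms(1) by (rule x''_norm_integrable)
    show "(\<lambda>r. r powr \<alpha> * (3 * kinetic r - d)) integrable_on {T..t}"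
      unfolding kinetic_def using cont \<open>T > 0\<close>
      by (auto intro!: integrable_continuous_interval continuous_intros)
    fix r
    assume r: "r \<in> {T..t} - N"
    then have "r \<in> {t0..} - N"
      using assms(1) by auto
    then obtain c where c: "c \<in> Cset m g (x r)" and x'': "x'' r = - (\<alpha> / r) *\<^sub>R x' r - c"
      using acceleration by blast
    have "0 + \<psi>' r \<bullet> x' r + x'' r \<bullet> \<psi> r = r powr \<alpha> * (2 * kinetic r - (x r - z) \<bullet> c)"
      using weighted_radial_derivative_eq[OF pos x''] r by (simp add: \<psi>_def \<psi>'_def)
    also have "\<dots> \<le> r powr \<alpha> * (3 * kinetic r - d)"
      using separated[OF _ c] r assms(1) by (intro mult_left_mono) auto
    finally show "0 + \<psi>' r \<bullet> x' r + x'' r \<bullet> \<psi> r \<le> r powr \<alpha> * (3 * kinetic r - d)" .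
  qed
  then show ?thesis
    by (simp add: \<psi>_def)
qed

lemma eventually_approaching:
  obtains T where "t0 \<le> T" "\<And>t. T \<le> t \<Longrightarrow> (x t - z) \<bullet> x' t \<le> -1"
proof -
  txt \<open>The tail of the damping integral is chosen so small that the kinetic term absorbs only
    half of the decrease d t^(\<alpha>+1)/(\<alpha>+1) of the weighted integral.\<close>
  define \<kappa> where "\<kappa> = d / (2 * (\<alpha> + 1))"
  have "\<kappa> > 0"
    using d_pos alpha by (simp add: \<kappa>_def)
  obtain T where T: "t0 \<le> T" and tail: "\<And>t. T \<le> t \<Longrightarrow> dissipation t - dissipation T \<le> d / (3 * (\<alpha> + 1))"
    using dissipation_tail[of "d / (3 * (\<alpha> + 1))"] d_pos alpha by auto
  define C where "C = T powr \<alpha> * ((x T - z) \<bullet> x' T) + d * T powr (\<alpha> + 1) / (\<alpha> + 1)"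
  have bound: "(x t - z) \<bullet> x' t \<le> C / t powr \<alpha> - \<kappa> * t" if "T \<le> t" for t
  proof -
    have "t > 0"
      using T t0 that by simp
    have "3/2 * t powr (\<alpha> + 1) * (dissipation t - dissipation T)
        \<le> 3/2 * t powr (\<alpha> + 1) * (d / (3 * (\<alpha> + 1)))"
      using tail[OF that] by (intro mult_left_mono) auto
    also have "\<dots> = \<kappa> * t powr (\<alpha> + 1)"
      using alpha by (simp add: \<kappa>_def field_simps)
    finally have "t powr \<alpha> * ((x t - z) \<bullet> x' t) - T powr \<alpha> * ((x T - z) \<bullet> x' T)
        \<le> \<kappa> * t powr (\<alpha> + 1) - d * (t powr (\<alpha> + 1) - T powr (\<alpha> + 1)) / (\<alpha> + 1)"
      using weighted_radial_velocity_increment[OF T that] weighted_kinetic_integral_le[OF T that, of d]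
      by linarith
    also have "\<dots> = C - T powr \<alpha> * ((x T - z) \<bullet> x' T) - \<kappa> * (t powr \<alpha> * t)"
      using alpha \<open>t > 0\<close> by (simp add: C_def \<kappa>_def powr_add field_simps)
    finally have "(x t - z) \<bullet> x' t \<le> (C - \<kappa> * (t powr \<alpha> * t)) / t powr \<alpha>"
      using \<open>t > 0\<close> by (simp add: pos_le_divide_eq mult.commute)
    then show ?thesis
      using \<open>t > 0\<close> by (simp add: diff_divide_distrib)
  qed
  obtain T' where "\<And>t. T' \<le> t \<Longrightarrow> C / t powr \<alpha> - \<kappa> * t \<le> -1"
    using eventually_powr_minus_linear_le[OF alpha \<open>\<kappa> > 0\<close>, of C] unfolding eventually_at_top_linorder
    by blast
  with bound T show thesis
    by (intro that[of "max T T'"]) force+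
qed

end

lemma not_separated:
  assumes "0 < d"
  shows "\<not> (\<forall>r c. t0 \<le> r \<longrightarrow> c \<in> Cset m g (x r) \<longrightarrow> d - kinetic r \<le> (x r - z) \<bullet> c)"
proof
  assume "\<forall>r c. t0 \<le> r \<longrightarrow> c \<in> Cset m g (x r) \<longrightarrow> d - kinetic r \<le> (x r - z) \<bullet> c"
  then obtain T where "t0 \<le> T" "\<And>t. T \<le> t \<Longrightarrow> (x t - z) \<bullet> x' t \<le> -1"
    using eventually_approaching[OF assms] by blast
  moreover have "(x has_vector_derivative x' t) (at t within {T..})" if "T \<le> t" for t
    using \<open>t0 \<le> T\<close> that by (auto intro: has_vector_derivative_within_subset[OF x_deriv])
  ultimately show False
    using not_eventually_approaching[of T x x' z] by blast
qed

lemma separated_below_energy_limits: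
  assumes "\<And>i. i \<in> {1..m} \<Longrightarrow> f i z + d \<le> energy_limit i"
    and "t0 \<le> r" "c \<in> Cset m g (x r)"
  shows "d - kinetic r \<le> (x r - z) \<bullet> c"
proof (rule inner_convex_hull_gradients_ge[where I = "{1..m}" and G = "\<lambda>i. g i (x r)"])
  show "c \<in> convex hull {g i (x r) | i. i \<in> {1..m}}"
    using assms(3) unfolding Cset_def .
  fix i
  assume i: "i \<in> {1..m}"
  show "convex_on UNIV (f i)" "GDERIV (f i) (x r) :> g i (x r)"
    using convex[OF i] grad[OF i] .
  show "f i z + (d - kinetic r) \<le> f i (x r)"
    using assms(1)[OF i] energy_limit_le[OF i assms(2)] by (simp add: energy_def)
qed

lemma kinetic_tendsto_zero: "(kinetic \<longlongrightarrow> 0) at_top"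
proof (rule ccontr)
  assume "\<not> (kinetic \<longlongrightarrow> 0) at_top"
  then obtain \<delta> where "\<delta> > 0" and often: "\<And>T. \<exists>t\<ge>T. \<delta> \<le> kinetic t"
    unfolding tendsto_iff eventually_at_top_linorder by (force simp: dist_real_def kinetic_def not_less)
  have "\<forall>\<^sub>F t in at_top. \<forall>i\<in>{1..m}. energy i t < energy_limit i + \<delta> / 2"
    using \<open>\<delta> > 0\<close> by (intro eventually_ball_finite ballI order_tendstoD(2)[OF energy_tendsto]) auto
  then obtain T where T: "\<And>t i. T \<le> t \<Longrightarrow> i \<in> {1..m} \<Longrightarrow> energy i t < energy_limit i + \<delta> / 2"
    unfolding eventually_at_top_linorder by blast
  obtain t1 where t1: "max T t0 \<le> t1" "\<delta> \<le> kinetic t1"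
    using often by blast
  have "f i (x t1) + \<delta> / 2 \<le> energy_limit i" if "i \<in> {1..m}" for i
    using T[OF _ that, of t1] t1 by (simp add: energy_def)
  then have "\<forall>r c. t0 \<le> r \<longrightarrow> c \<in> Cset m g (x r) \<longrightarrow> \<delta> / 2 - kinetic r \<le> (x r - x t1) \<bullet> c"
    by (blast intro: separated_below_energy_limits)
  with not_separated[of "\<delta> / 2" "x t1"] \<open>\<delta> > 0\<close> show False
    by simp
qed

end

theorem theorem4p9:
  fixes m :: nat
    and f :: "nat \<Rightarrow> 'a::{real_inner, complete_space} \<Rightarrow> real"
    and g :: "nat \<Rightarrow> 'a \<Rightarrow> 'a"
    and \<alpha> t0 :: real
    and x0 :: 'a
    and x x' x'' :: "real \<Rightarrow> 'a"
  assumes m: "m \<ge> 1"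
    and convex: "\<And>i. i \<in> {1..m} \<Longrightarrow> convex_on UNIV (f i)"
    and grad: "\<And>i z. i \<in> {1..m} \<Longrightarrow> GDERIV (f i) z :> g i z"
    and grad_cont: "\<And>i. i \<in> {1..m} \<Longrightarrow> continuous_on UNIV (g i)"
    and alpha: "\<alpha> > 0" and t0: "t0 > 0"
    \<comment> \<open>x is C^1 on [t0,+\<infinity>) with derivative x'\<close>
    and x_deriv: "\<And>t. t \<ge> t0 \<Longrightarrow> (x has_vector_derivative x' t) (at t within {t0..})"
    and x'_cont: "continuous_on {t0..} x'"
    \<comment> \<open>x' absolutely continuous on every [t0,T]\<close>
    and x'_ac: "\<And>T. T \<ge> t0 \<Longrightarrow> abs_continuous_on t0 T x'"
    \<comment> \<open>x'' Bochner measurable, x'(t) = x'(t0) + (Bochner) integral of x'' over [t0,t]\<close>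
    and x''_meas: "strongly_measurable_on {t0..} x''"
    and x''_norm_int: "\<And>T. T \<ge> t0 \<Longrightarrow> (\<lambda>s. norm (x'' s)) integrable_on {t0..T}"
    and x''_int: "\<And>t. t \<ge> t0 \<Longrightarrow> (x'' has_integral (x' t - x' t0)) {t0..t}"
    and x''_deriv: "AE t in lebesgue. t \<ge> t0 \<longrightarrow> (x' has_vector_derivative x'' t) (at t)"
    \<comment> \<open>the differential inclusion, for almost all t > t0\<close>
    and eq: "AE t in lebesgue. t > t0 \<longrightarrow>
               (\<alpha> / t) *\<^sub>R x' t + proj ((\<lambda>c. c + x'' t) ` Cset m g (x t)) 0 = 0"
    and init: "x t0 = x0" "x' t0 = 0"
    and bdd_below: "\<And>i. i \<in> {1..m} \<Longrightarrow> \<exists>b. \<forall>z. b \<le> f i z"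
    \<comment> \<open>Assumption on the weak Pareto set\<close>
    and pareto_ex: "\<And>y0 z. z \<in> level_set m f (\<lambda>i. f i y0) \<Longrightarrow>
                       \<exists>xs. xs \<in> Pw_level m f (\<lambda>i. f i z)"
    and R_finite: "\<exists>R. \<forall>xs \<in> Pw_level m f (\<lambda>i. f i x0).
                     Inf {norm (z - x0) ^ 2 / 2 | z. \<forall>i\<in>{1..m}. f i z = f i xs} \<le> R"
  shows "\<forall>i\<in>{1..m}. \<exists>L::real.
           ((\<lambda>t. f i (x t)) \<longlongrightarrow> L) at_top \<and>
           ((\<lambda>t. f i (x t) + norm (x' t) ^ 2 / 2) \<longlongrightarrow> L) at_top"
proof -
  interpret inertial_multiobjective_flow m f g \<alpha> t0 x x' x''
    using m convex grad alpha t0 x_deriv x'_cont x''_norm_int x''_int eq bdd_below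
    by unfold_locales
  show ?thesis
  proof
    fix i
    assume i: "i \<in> {1..m}"
    have "((\<lambda>t. energy i t - kinetic t) \<longlongrightarrow> energy_limit i - 0) at_top"
      by (intro tendsto_diff energy_tendsto[OF i] kinetic_tendsto_zero)
    with energy_tendsto[OF i]
    show "\<exists>L. ((\<lambda>t. f i (x t)) \<longlongrightarrow> L) at_top \<and>
        ((\<lambda>t. f i (x t) + norm (x' t) ^ 2 / 2) \<longlongrightarrow> L) at_top"
      unfolding energy_def[abs_def] kinetic_def by auto
  qed
qed

end
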